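(* Let $\mathcal H$ be a Hilbert space over $\mathbb K\in\{\mathbb R,\mathbb C\}$ and let $\mathbf{x},\mathbf{y}\in\mathcal H$ be norm one vectors. Then there is a (nonzero) continuous symmetric bilinear form $T:\mathcal H\times\mathcal H\to\mathbb K$ that attains its norm at $(\mathbf{x},\mathbf{y})$.
   Context: The norm of a bilinear form is $\|T\|=\sup\{|T(\mathbf{w}_1,\mathbf{w}_2)|:\|\mathbf{w}_1\|,\|\mathbf{w}_2\|\le1\}$, and $T$ attains its norm at $(\mathbf{x},\mathbf{y})$ if $|T(\mathbf{x},\mathbf{y})|=\|T\|$. Bilinear means $\mathbb K$-bilinear. *)

theory Defs
  imports "HOL-Analysis.Analysis"
begin

definition bilin_norm :: "('a::real_normed_vector \<Rightarrow> 'a \<Rightarrow> real) \<Rightarrow> real" where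
  "bilin_norm T = Sup {\<bar>T w1 w2\<bar> | w1 w2. norm w1 \<le> 1 \<and> norm w2 \<le> 1}"

definition complex_inner_product_space ::
  "(complex \<Rightarrow> 'v::ab_group_add \<Rightarrow> 'v) \<Rightarrow> ('v \<Rightarrow> 'v \<Rightarrow> complex) \<Rightarrow> bool" where
  "complex_inner_product_space sc ip \<longleftrightarrow>
     vector_space sc \<and>
     (\<forall>x y z. ip (x + y) z = ip x z + ip y z) \<and>
     (\<forall>a x y. ip (sc a x) y = a * ip x y) \<and>
     (\<forall>x y. ip y x = cnj (ip x y)) \<and>
     (\<forall>x. Im (ip x x) = 0 \<and> Re (ip x x) \<ge> 0) \<and>
     (\<forall>x. ip x x = 0 \<longrightarrow> x = 0)"

definition ip_norm :: "('v \<Rightarrow> 'v \<Rightarrow> complex) \<Rightarrow> 'v \<Rightarrow> real" where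
  "ip_norm ip x = sqrt (Re (ip x x))"

definition complex_hilbert_space ::
  "(complex \<Rightarrow> 'v::ab_group_add \<Rightarrow> 'v) \<Rightarrow> ('v \<Rightarrow> 'v \<Rightarrow> complex) \<Rightarrow> bool" where
  "complex_hilbert_space sc ip \<longleftrightarrow>
     complex_inner_product_space sc ip \<and>
     (\<forall>X :: nat \<Rightarrow> 'v.
        (\<forall>e>0. \<exists>N. \<forall>m\<ge>N. \<forall>n\<ge>N. ip_norm ip (X m - X n) < e) \<longrightarrow>
        (\<exists>L. (\<lambda>n. ip_norm ip (X n - L)) \<longlonglongrightarrow> 0))"

definition complex_bilinear ::
  "(complex \<Rightarrow> 'v::ab_group_add \<Rightarrow> 'v) \<Rightarrow> ('v \<Rightarrow> 'v \<Rightarrow> complex) \<Rightarrow> bool" where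
  "complex_bilinear sc T \<longleftrightarrow>
     (\<forall>y. Vector_Spaces.linear sc ((*) :: complex \<Rightarrow> complex \<Rightarrow> complex) (\<lambda>x. T x y)) \<and>
     (\<forall>x. Vector_Spaces.linear sc ((*) :: complex \<Rightarrow> complex \<Rightarrow> complex) (\<lambda>y. T x y))"

definition ip_continuous2 ::
  "('v::ab_group_add \<Rightarrow> 'v \<Rightarrow> complex) \<Rightarrow> ('v \<Rightarrow> 'v \<Rightarrow> complex) \<Rightarrow> bool" where
  "ip_continuous2 ip T \<longleftrightarrow>
     (\<forall>a b. \<forall>e>0. \<exists>d>0. \<forall>x y. ip_norm ip (x - a) < d \<and> ip_norm ip (y - b) < d \<longrightarrow>
        cmod (T x y - T a b) < e)"

definition ip_bilin_norm ::
  "('v \<Rightarrow> 'v \<Rightarrow> complex) \<Rightarrow> ('v \<Rightarrow> 'v \<Rightarrow> complex) \<Rightarrow> real" where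
  "ip_bilin_norm ip T =
     Sup {cmod (T w1 w2) | w1 w2. ip_norm ip w1 \<le> 1 \<and> ip_norm ip w2 \<le> 1}"

end

theory Submission
  imports Defs
begin

text \<open>Put \<open>p = x + y\<close> and \<open>q = x - y\<close>; when \<open>\<langle>x, y\<rangle>\<close> is real these are orthogonal, and the
  form \<open>T(u, v) = \<langle>u, p\<rangle>\<langle>v, p\<rangle>/\<langle>p, p\<rangle> - \<langle>u, q\<rangle>\<langle>v, q\<rangle>/\<langle>q, q\<rangle>\<close> is symmetric and bilinear, since the
  inner product is only ever taken linearly in \<open>u\<close> and \<open>v\<close>. Bessel's inequality for the pair
  \<open>p, q\<close> bounds the coordinate vectors \<open>(\<langle>u, p\<rangle>/|p|, \<langle>u, q\<rangle>/|q|)\<close> by \<open>|u|\<close>, so the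
  Cauchy-Schwarz inequality in the plane gives \<open>|T(u, v)| \<le> |u| |v|\<close>, while \<open>T(x, y) = 1\<close>.
  In the complex case \<open>x\<close> is first multiplied by a unimodular scalar making \<open>\<langle>x, y\<rangle>\<close> real,
  which changes \<open>T(x, y)\<close> only by that scalar.\<close>

lemma abs_mult_add_abs_mult_le:
  fixes a b c d m n :: real
  assumes "a\<^sup>2 + b\<^sup>2 \<le> m\<^sup>2" "c\<^sup>2 + d\<^sup>2 \<le> n\<^sup>2" "0 \<le> m" "0 \<le> n"
  shows "\<bar>a * c\<bar> + \<bar>b * d\<bar> \<le> m * n"
proof -
  have "(\<bar>a * c\<bar> + \<bar>b * d\<bar>)\<^sup>2 = (a\<^sup>2 + b\<^sup>2) * (c\<^sup>2 + d\<^sup>2) - (\<bar>a\<bar> * \<bar>d\<bar> - \<bar>b\<bar> * \<bar>c\<bar>)\<^sup>2"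
    by (simp add: abs_mult power2_eq_square algebra_simps)
  also have "\<dots> \<le> (a\<^sup>2 + b\<^sup>2) * (c\<^sup>2 + d\<^sup>2)"
    by simp
  also have "\<dots> \<le> m\<^sup>2 * n\<^sup>2"
    using assms by (intro mult_mono) auto
  also have "\<dots> = (m * n)\<^sup>2"
    by (simp add: power_mult_distrib)
  finally show ?thesis
    using assms by (meson abs_ge_zero add_nonneg_nonneg mult_nonneg_nonneg power2_le_imp_le)
qed

lemma sum_diff_quotients_eq_1:
  fixes c :: "'a::field_char_0"
  shows "(1 + c) * (1 + c) / (2 + 2 * c) - (1 - c) * (c - 1) / (2 - 2 * c) = 1"
proof -
  have "2 + 2 * c = (1 + c) * 2" "2 - 2 * c = (1 - c) * 2"
    by (simp_all add: algebra_simps)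
  moreover have "(1 + c) * (1 + c) / ((1 + c) * 2) = (1 + c) / 2"
    by (cases "1 + c = 0") (simp, rule nonzero_mult_divide_mult_cancel_left)
  moreover have "(1 - c) * (c - 1) / ((1 - c) * 2) = (c - 1) / 2"
    by (cases "1 - c = 0") (simp, rule nonzero_mult_divide_mult_cancel_left)
  moreover have "(1 + c) / 2 - (c - 1) / 2 = (1 :: 'a)"
    by (simp add: field_simps)
  ultimately show ?thesis
    by (simp only:)
qed

lemma cmod_mult_divide_of_real_power2:
  "cmod (x * y / complex_of_real (s\<^sup>2)) = \<bar>(cmod x / s) * (cmod y / s)\<bar>"
  by (simp add: norm_mult norm_divide abs_mult power2_eq_square)

lemma Sup_unit_ball_values_eq_1:
  fixes g :: "'a \<Rightarrow> 'a \<Rightarrow> real" and N :: "'a \<Rightarrow> real"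
  assumes bound: "\<And>u v. g u v \<le> N u * N v" and "\<And>u. 0 \<le> N u"
    and "N a = 1" "N b = 1" "g a b = 1"
  shows "Sup {g w1 w2 | w1 w2. N w1 \<le> 1 \<and> N w2 \<le> 1} = 1"
proof (rule cSup_eq_maximum)
  show "1 \<in> {g w1 w2 | w1 w2. N w1 \<le> 1 \<and> N w2 \<le> 1}"
    using assms(3-5) by force
next
  fix r
  assume "r \<in> {g w1 w2 | w1 w2. N w1 \<le> 1 \<and> N w2 \<le> 1}"
  then obtain w1 w2 where "r = g w1 w2" "N w1 \<le> 1" "N w2 \<le> 1"
    by blast
  with bound[of w1 w2] show "r \<le> 1"
    using assms(2) mult_le_one order_trans by blast
qed

lemma bessel_inequality_orthogonal_pair:
  fixes u p q :: "'a::real_inner"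
  assumes "inner p q = 0"
  shows "(inner u p)\<^sup>2 / (norm p)\<^sup>2 + (inner u q)\<^sup>2 / (norm q)\<^sup>2 \<le> (norm u)\<^sup>2"
proof -
  define a where "a = inner u p / inner p p"
  define b where "b = inner u q / inner q q"
  have "0 \<le> inner (u - a *\<^sub>R p - b *\<^sub>R q) (u - a *\<^sub>R p - b *\<^sub>R q)"
    by simp
  also have "\<dots> = inner u u + (a\<^sup>2 * inner p p - 2 * a * inner u p) + (b\<^sup>2 * inner q q - 2 * b * inner u q)"
    using assms by (simp add: inner_diff_left inner_diff_right inner_commute algebra_simps power2_eq_square)
  also have "a\<^sup>2 * inner p p - 2 * a * inner u p = - (inner u p)\<^sup>2 / inner p p"
    by (cases "p = 0") (auto simp: a_def field_simps power2_eq_square)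
  also have "b\<^sup>2 * inner q q - 2 * b * inner u q = - (inner u q)\<^sup>2 / inner q q"
    by (cases "q = 0") (auto simp: b_def field_simps power2_eq_square)
  finally show ?thesis
    by (simp add: power2_norm_eq_inner)
qed

text \<open>When \<open>p = 0\<close> or \<open>q = 0\<close> the corresponding term vanishes, because division by zero yields zero;
  this covers \<open>y = \<plusminus>x\<close>.\<close>
definition rank_two_form :: "'a::real_inner \<Rightarrow> 'a \<Rightarrow> 'a \<Rightarrow> 'a \<Rightarrow> real" where
  "rank_two_form p q u v = inner u p * inner v p / (norm p)\<^sup>2 - inner u q * inner v q / (norm q)\<^sup>2"

lemma bilinear_rank_two_form: "bilinear (rank_two_form p q)"
  unfolding bilinear_def rank_two_form_def
  by (intro allI conjI linearI)
    (simp_all add: inner_add_left diff_divide_distrib add_divide_distrib algebra_simps)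

lemma rank_two_form_commute: "rank_two_form p q u v = rank_two_form p q v u"
  by (simp add: rank_two_form_def mult.commute)

lemma continuous_on_rank_two_form: "continuous_on UNIV (\<lambda>(u, v). rank_two_form p q u v)"
  unfolding rank_two_form_def case_prod_unfold divide_inverse by (intro continuous_intros)

lemma abs_rank_two_form_le:
  assumes "inner p q = 0"
  shows "\<bar>rank_two_form p q u v\<bar> \<le> norm u * norm v"
proof -
  have "rank_two_form p q u v =
      (inner u p / norm p) * (inner v p / norm p) - (inner u q / norm q) * (inner v q / norm q)"
    by (simp add: rank_two_form_def power2_eq_square)
  moreover have "\<bar>(inner u p / norm p) * (inner v p / norm p)\<bar> + \<bar>(inner u q / norm q) * (inner v q / norm q)\<bar>
      \<le> norm u * norm v"
    using bessel_inequality_orthogonal_pair[OF assms, of u] bessel_inequality_orthogonal_pair[OF assms, of v]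
    by (intro abs_mult_add_abs_mult_le) (simp_all add: power_divide)
  ultimately show ?thesis
    by linarith
qed

lemma rank_two_form_sum_diff_eq_1:
  fixes x y :: "'a::real_inner"
  assumes "norm x = 1" "norm y = 1"
  shows "inner (x + y) (x - y) = 0" and "rank_two_form (x + y) (x - y) x y = 1"
proof -
  have xy: "inner x x = 1" "inner y y = 1"
    using assms by (simp_all add: dot_square_norm)
  then show "inner (x + y) (x - y) = 0"
    by (simp add: inner_add_left inner_add_right inner_diff_left inner_diff_right inner_commute)
  show "rank_two_form (x + y) (x - y) x y = 1"
    using xy sum_diff_quotients_eq_1[of "inner x y"]
    by (simp add: rank_two_form_def power2_norm_eq_inner inner_add_left inner_add_right
        inner_diff_left inner_diff_right inner_commute algebra_simps)
qed

lemma real_form_attaining_norm: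
  fixes x y :: "'a::real_inner"
  assumes "norm x = 1" "norm y = 1"
  shows "\<exists>T :: 'a \<Rightarrow> 'a \<Rightarrow> real.
           bilinear T \<and> (\<forall>u v. T u v = T v u) \<and> continuous_on UNIV (\<lambda>(u, v). T u v) \<and>
           T \<noteq> (\<lambda>_ _. 0) \<and> \<bar>T x y\<bar> = bilin_norm T"
proof (intro exI conjI allI)
  let ?T = "rank_two_form (x + y) (x - y)"
  show "bilinear ?T" "?T u v = ?T v u" "continuous_on UNIV (\<lambda>(u, v). ?T u v)" for u v
    by (simp_all add: bilinear_rank_two_form rank_two_form_commute[of _ _ u] continuous_on_rank_two_form)
  have Txy: "?T x y = 1"
    using rank_two_form_sum_diff_eq_1[OF assms] by blast
  then show "?T \<noteq> (\<lambda>_ _. 0)"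
    by force
  have "bilin_norm ?T = 1"
    unfolding bilin_norm_def
    using abs_rank_two_form_le rank_two_form_sum_diff_eq_1[OF assms] assms
    by (intro Sup_unit_ball_values_eq_1[where a = x and b = y]) auto
  with Txy show "\<bar>?T x y\<bar> = bilin_norm ?T"
    by simp
qed

locale complex_ip_space =
  fixes sc :: "complex \<Rightarrow> 'v::ab_group_add \<Rightarrow> 'v" and ip :: "'v \<Rightarrow> 'v \<Rightarrow> complex"
  assumes complex_inner_product_space: "complex_inner_product_space sc ip"
begin

sublocale vector_space sc
  using complex_inner_product_space by (simp add: complex_inner_product_space_def)

lemma ip_add_left: "ip (x + y) z = ip x z + ip y z"
  and ip_scale_left: "ip (sc a x) y = a * ip x y"
  and ip_cnj_commute: "ip y x = cnj (ip x y)"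
  and ip_self_nonneg: "0 \<le> Re (ip x x)"
  and Im_ip_self: "Im (ip x x) = 0"
  and ip_self_eq_0: "ip x x = 0 \<Longrightarrow> x = 0"
  using complex_inner_product_space unfolding complex_inner_product_space_def by blast+

lemma linear_functionalI:
  assumes "\<And>x y. f (x + y) = f x + f y" and "\<And>a x. f (sc a x) = a * f x"
  shows "Vector_Spaces.linear sc ((*) :: complex \<Rightarrow> complex \<Rightarrow> complex) f"
  using assms vector_space_axioms vector_space_over_itself.vector_space_axioms
  by (simp add: Vector_Spaces.linear_iff)

lemma ip_diff_left: "ip (x - y) z = ip x z - ip y z"
  using ip_add_left[of x "sc (-1) y" z] ip_scale_left[of "-1" y z] by simp

lemma ip_add_right: "ip x (y + z) = ip x y + ip x z"
  using ip_cnj_commute[of x] by (simp add: ip_add_left)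

lemma ip_diff_right: "ip x (y - z) = ip x y - ip x z"
  using ip_cnj_commute[of x] by (simp add: ip_diff_left)

lemma ip_scale_right: "ip x (sc a y) = cnj a * ip x y"
  using ip_cnj_commute[of x] by (simp add: ip_scale_left)

lemma ip_zero_left: "ip 0 x = 0"
  using ip_diff_left[of 0 0 x] by simp

lemma ip_zero_right: "ip x 0 = 0"
  using ip_diff_right[of x 0 0] by simp

lemma ip_norm_nonneg: "0 \<le> ip_norm ip u"
  and ip_norm_power2: "(ip_norm ip u)\<^sup>2 = Re (ip u u)"
  by (simp_all add: ip_norm_def ip_self_nonneg)

lemma ip_self_eq_norm_power2: "ip u u = complex_of_real ((ip_norm ip u)\<^sup>2)"
  using Im_ip_self by (simp add: complex_eq_iff ip_norm_power2)

lemma ip_norm_sub_projection_power2: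
  fixes u w :: 'v
  defines "u' \<equiv> u - sc (ip u w / ip w w) w"
  shows "(ip_norm ip u')\<^sup>2 = (ip_norm ip u)\<^sup>2 - (cmod (ip u w))\<^sup>2 / (ip_norm ip w)\<^sup>2"
proof (cases "w = 0")
  case True
  then show ?thesis
    by (simp add: u'_def ip_zero_left ip_zero_right ip_norm_power2)
next
  case False
  define n where "n = (ip_norm ip w)\<^sup>2"
  have w: "ip w w = complex_of_real n"
    unfolding n_def by (rule ip_self_eq_norm_power2)
  with False have "n \<noteq> 0"
    using ip_self_eq_0 by force
  define g where "g = ip u w"
  define a where "a = g / n"
  have "ip u' u' = ip u u - cnj a * g - a * (cnj g - cnj a * n)"
    by (simp add: u'_def a_def g_def w ip_diff_left ip_diff_right ip_scale_left ip_scale_right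
        ip_cnj_commute[of w u])
  also have "\<dots> = ip u u - g * cnj g / n"
    using \<open>n \<noteq> 0\<close> by (simp add: a_def field_simps)
  also have "\<dots> = ip u u - complex_of_real ((cmod g)\<^sup>2 / n)"
    by (simp only: complex_norm_square of_real_divide)
  finally show ?thesis
    by (simp add: ip_norm_power2 g_def n_def)
qed

lemma ip_bessel_orthogonal_pair:
  assumes "ip p q = 0"
  shows "(cmod (ip u p))\<^sup>2 / (ip_norm ip p)\<^sup>2 + (cmod (ip u q))\<^sup>2 / (ip_norm ip q)\<^sup>2 \<le> (ip_norm ip u)\<^sup>2"
proof -
  define u' where "u' = u - sc (ip u p / ip p p) p"
  have "ip u' q = ip u q"
    using assms by (simp add: u'_def ip_diff_left ip_scale_left)
  moreover have "(ip_norm ip u')\<^sup>2 = (ip_norm ip u)\<^sup>2 - (cmod (ip u p))\<^sup>2 / (ip_norm ip p)\<^sup>2"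
    unfolding u'_def by (rule ip_norm_sub_projection_power2)
  moreover have "0 \<le> (ip_norm ip u')\<^sup>2 - (cmod (ip u' q))\<^sup>2 / (ip_norm ip q)\<^sup>2"
    using ip_norm_sub_projection_power2[of u' q] by (metis zero_le_power2)
  ultimately show ?thesis
    by simp
qed

definition ip_rank_two_form :: "'v \<Rightarrow> 'v \<Rightarrow> 'v \<Rightarrow> 'v \<Rightarrow> complex" where
  "ip_rank_two_form p q u v = ip u p * ip v p / ip p p - ip u q * ip v q / ip q q"

lemma ip_rank_two_form_commute: "ip_rank_two_form p q u v = ip_rank_two_form p q v u"
  by (simp add: ip_rank_two_form_def mult.commute)

lemma ip_rank_two_form_scale_left: "ip_rank_two_form p q (sc a u) v = a * ip_rank_two_form p q u v"
  by (simp add: ip_rank_two_form_def ip_scale_left algebra_simps)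

lemma complex_bilinear_ip_rank_two_form: "complex_bilinear sc (ip_rank_two_form p q)"
proof -
  have linear_left: "Vector_Spaces.linear sc (*) (\<lambda>u. ip_rank_two_form p q u v)" for v
    by (rule linear_functionalI)
      (simp add: ip_rank_two_form_def ip_add_left distrib_right add_divide_distrib,
        rule ip_rank_two_form_scale_left)
  have "Vector_Spaces.linear sc (*) (\<lambda>v. ip_rank_two_form p q u v)" for u
    using linear_left[of u] by (rule back_subst) (simp add: fun_eq_iff ip_rank_two_form_commute)
  with linear_left show ?thesis
    unfolding complex_bilinear_def by blast
qed

lemma cmod_ip_rank_two_form_le:
  assumes "ip p q = 0"
  shows "cmod (ip_rank_two_form p q u v) \<le> ip_norm ip u * ip_norm ip v"
proof -
  have cmod_term: "cmod (ip u w * ip v w / ip w w)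
      = \<bar>(cmod (ip u w) / ip_norm ip w) * (cmod (ip v w) / ip_norm ip w)\<bar>" for w
    unfolding ip_self_eq_norm_power2[of w] by (rule cmod_mult_divide_of_real_power2)
  have "cmod (ip_rank_two_form p q u v) \<le> cmod (ip u p * ip v p / ip p p) + cmod (ip u q * ip v q / ip q q)"
    unfolding ip_rank_two_form_def by (rule norm_triangle_ineq4)
  also have "\<dots> \<le> ip_norm ip u * ip_norm ip v"
    unfolding cmod_term
    using ip_bessel_orthogonal_pair[OF assms, of u] ip_bessel_orthogonal_pair[OF assms, of v]
    by (intro abs_mult_add_abs_mult_le) (simp_all add: power_divide ip_norm_nonneg)
  finally show ?thesis .
qed

lemma ip_rank_two_form_sum_diff_eq_1:
  assumes "ip x x = 1" "ip y y = 1" "ip x y = complex_of_real c"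
  shows "ip (x + y) (x - y) = 0" and "ip_rank_two_form (x + y) (x - y) x y = 1"
proof -
  have "ip y x = complex_of_real c"
    using assms(3) by (simp add: ip_cnj_commute[of y x])
  then show "ip (x + y) (x - y) = 0" "ip_rank_two_form (x + y) (x - y) x y = 1"
    using assms sum_diff_quotients_eq_1[of "complex_of_real c"]
    by (simp_all add: ip_rank_two_form_def ip_add_left ip_add_right ip_diff_left ip_diff_right algebra_simps)
qed

lemma ip_continuous2_if_bounded:
  assumes "complex_bilinear sc T" and "0 \<le> C"
    and bound: "\<And>u v. cmod (T u v) \<le> C * ip_norm ip u * ip_norm ip v"
  shows "ip_continuous2 ip T"
  unfolding ip_continuous2_def
proof (intro allI impI)
  fix a b and e :: real
  assume "0 < e"
  have diff_left: "T (u - u') v = T u v - T u' v" and diff_right: "T v (u - u') = T v u - T v u'" for u u' v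
    using assms(1) module_hom.diff unfolding complex_bilinear_def linear_iff_module_hom by metis+
  define na nb where "na = ip_norm ip a" and "nb = ip_norm ip b"
  define K where "K = C * (1 + na + nb) + 1"
  define d where "d = min 1 (e / K)"
  have "0 \<le> na" "0 \<le> nb"
    by (simp_all add: na_def nb_def ip_norm_nonneg)
  then have "0 < K"
    using \<open>0 \<le> C\<close> by (simp add: K_def add_nonneg_pos)
  then have "0 < d" "d \<le> 1" "d * K \<le> e"
    using \<open>0 < e\<close> by (auto simp: d_def min_def field_simps)
  moreover have "cmod (T x y - T a b) < e"
    if dx: "ip_norm ip (x - a) < d" and dy: "ip_norm ip (y - b) < d" for x y
  proof -
    have "T x y - T a b = T (x - a) (y - b) + T (x - a) b + T a (y - b)"
      unfolding diff_left diff_right by simp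
    then have "cmod (T x y - T a b) \<le> cmod (T (x - a) (y - b)) + cmod (T (x - a) b) + cmod (T a (y - b))"
      by (metis norm_triangle_ineq add_right_mono order_trans)
    also have "\<dots> \<le> C * ip_norm ip (x - a) * ip_norm ip (y - b) + C * ip_norm ip (x - a) * nb
        + C * na * ip_norm ip (y - b)"
      unfolding na_def nb_def by (intro add_mono bound)
    also have "\<dots> = C * (ip_norm ip (x - a) * ip_norm ip (y - b) + ip_norm ip (x - a) * nb
        + na * ip_norm ip (y - b))"
      by (simp add: algebra_simps)
    also have "\<dots> \<le> C * (d * 1 + d * nb + na * d)"
      using dx dy \<open>d \<le> 1\<close> \<open>0 \<le> na\<close> \<open>0 \<le> nb\<close> ip_norm_nonneg[of "x - a"] ip_norm_nonneg[of "y - b"]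
      by (intro mult_left_mono add_mono mult_mono \<open>0 \<le> C\<close>) auto
    also have "\<dots> < d * K"
      using \<open>0 < d\<close> by (simp add: K_def algebra_simps)
    finally show ?thesis
      using \<open>d * K \<le> e\<close> by linarith
  qed
  ultimately show "\<exists>d>0. \<forall>x y. ip_norm ip (x - a) < d \<and> ip_norm ip (y - b) < d \<longrightarrow> cmod (T x y - T a b) < e"
    by blast
qed

lemma complex_form_attaining_norm:
  assumes "ip_norm ip x = 1" "ip_norm ip y = 1"
  shows "\<exists>T :: 'v \<Rightarrow> 'v \<Rightarrow> complex.
           complex_bilinear sc T \<and> (\<forall>u v. T u v = T v u) \<and> ip_continuous2 ip T \<and>
           T \<noteq> (\<lambda>_ _. 0) \<and> cmod (T x y) = ip_bilin_norm ip T"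
proof -
  define \<omega> where "\<omega> = cis (- Arg (ip x y))"
  define z where "z = sc \<omega> x"
  have xx: "ip x x = 1" and yy: "ip y y = 1"
    using assms by (simp_all add: ip_self_eq_norm_power2)
  have zy: "ip z y = complex_of_real (cmod (ip x y))"
    unfolding z_def \<omega>_def ip_scale_left
    by (metis rcis_cmod_Arg rcis_def cis_mult add.left_inverse cis_zero mult.left_commute mult_1_right)
  have zz: "ip z z = 1"
    by (simp add: z_def \<omega>_def ip_scale_left ip_scale_right xx cis_cnj cis_mult)
  have orth: "ip (z + y) (z - y) = 0" and Tzy: "ip_rank_two_form (z + y) (z - y) z y = 1"
    using ip_rank_two_form_sum_diff_eq_1[OF zz yy zy] by simp_all
  define T where "T = ip_rank_two_form (z + y) (z - y)"
  have "T z y = \<omega> * T x y"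
    by (simp add: T_def z_def ip_rank_two_form_scale_left)
  with Tzy have Txy: "cmod (T x y) = 1"
    by (metis T_def \<omega>_def norm_cis norm_mult norm_one mult_1)
  have bound: "cmod (T u v) \<le> ip_norm ip u * ip_norm ip v" for u v
    unfolding T_def using orth by (rule cmod_ip_rank_two_form_le)
  show ?thesis
  proof (intro exI[of _ T] conjI allI)
    show bilinear: "complex_bilinear sc T"
      by (simp add: T_def complex_bilinear_ip_rank_two_form)
    show "T u v = T v u" for u v
      by (simp add: T_def ip_rank_two_form_commute[of _ _ u])
    show "ip_continuous2 ip T"
      using bilinear bound by (intro ip_continuous2_if_bounded[where C = 1]) auto
    show "T \<noteq> (\<lambda>_ _. 0)"
      using Txy by force
    have "ip_bilin_norm ip T = 1"
      unfolding ip_bilin_norm_def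
      using bound Txy assms ip_norm_nonneg
      by (intro Sup_unit_ball_values_eq_1[where a = x and b = y]) auto
    with Txy show "cmod (T x y) = ip_bilin_norm ip T"
      by simp
  qed
qed

end

theorem proposition2p3:
  fixes x y :: "'a::{real_inner, complete_space}"
    and sc :: "complex \<Rightarrow> 'v::ab_group_add \<Rightarrow> 'v"
    and ip :: "'v \<Rightarrow> 'v \<Rightarrow> complex"
  shows
    "(norm x = 1 \<and> norm y = 1 \<longrightarrow>
       (\<exists>T :: 'a \<Rightarrow> 'a \<Rightarrow> real.
          bilinear T \<and> (\<forall>u v. T u v = T v u) \<and> continuous_on UNIV (\<lambda>(u, v). T u v) \<and>
          T \<noteq> (\<lambda>_ _. 0) \<and> \<bar>T x y\<bar> = bilin_norm T))
     \<and>
     (\<forall>x' y'. complex_hilbert_space sc ip \<and> ip_norm ip x' = 1 \<and> ip_norm ip y' = 1 \<longrightarrow>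
       (\<exists>T :: 'v \<Rightarrow> 'v \<Rightarrow> complex.
          complex_bilinear sc T \<and> (\<forall>u v. T u v = T v u) \<and> ip_continuous2 ip T \<and>
          T \<noteq> (\<lambda>_ _. 0) \<and> cmod (T x' y') = ip_bilin_norm ip T))"
proof -
  have "complex_ip_space sc ip" if "complex_hilbert_space sc ip"
    using that by (simp add: complex_hilbert_space_def complex_ip_space_def)
  then show ?thesis
    using real_form_attaining_norm complex_ip_space.complex_form_attaining_norm by blast
qed

end
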